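(* Let $U\in\mathbb{R}^{n\times r}$, $H=U-U^\star P_U$, and suppose $\|H\|_F\le 0.07\,\underline c/\omega^3$. Under Assumptions (A1)–(A3) and $r=O(n^{1.25})$, for all sufficiently large $n$, with $T=U\circ U\circ U$, $$1.679\,\underline c^{\,4}\|H\|_F^2\le\|T-T^\star\|_F^2\le 10.336\,\omega^4\underline c^{\,4}\|H\|_F^2.$$
   Context: Notation. For $U=[u_1,\dots,u_r]\in\mathbb{R}^{n\times r}$, $U\circ U\circ U:=\sum_{j=1}^r u_j\otimes u_j\otimes u_j$, $(a\otimes b\otimes c)_{ijk}=a_ib_jc_k$; $\|\cdot\|_F$ is the Frobenius norm; for matrices $\|\cdot\|$ is the spectral norm. Setup. $T^\star=\sum_{p=1}^r c_p^\star\hat u_p\otimes\hat u_p\otimes\hat u_p$ with $c_p^\star>0$ and $\|\hat u_p\|_2=1$; $\hat U=[\hat u_1,\dots,\hat u_r]$; $U^\star=[(c_1^\star)^{1/3}\hat u_1,\dots,(c_r^\star)^{1/3}\hat u_r]$, so $T^\star=U^\star\circ U^\star\circ U^\star$. $\underline c=\min_p (c_p^\star)^{1/3}$, $\bar c=\max_p (c_p^\star)^{1/3}$, $\omega=\bar c/\underline c$. $P_U$ is an $r\times r$ permutation matrix minimizing $\|U-U^\star P\|_F$ over permutation matrices $P$. Assumptions. $\gamma$ denotes a quantity bounded by a polylogarithmic function of $n$, and $c_1>0$ an absolute constant. (A1) $\max_{i\ne j}|\langle\hat u_i,\hat u_j\rangle|\le\gamma/\sqrt n$. (A2) $\|\hat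 U\|\le 1+c_1\sqrt{r/n}$. (A3) $\|(\hat U^\top\hat U)\odot(\hat U^\top\hat U)-I_r\|\le\gamma\sqrt r/n$, $\odot$ the Hadamard product. Asymptotic convention: "for sufficiently large $n$" under hypotheses like $r=O(n^{a})$ refers to a family of instances indexed by $n$ and asserts the conclusion for all $n\ge n_0$, with $n_0$ depending only on the implicit constants. *)

theory Defs
  imports Complex_Main
begin

text \<open>Vectors in R^n are functions nat => real (entries at indices < n);
 n x r matrices are functions nat => nat => real (entries at i < n, j < r);
 order-3 tensors in R^{n x n x n} are functions nat => nat => nat => real.\<close>

definition sym_cp3 :: "nat \<Rightarrow> (nat \<Rightarrow> nat \<Rightarrow> real) \<Rightarrow> (nat \<Rightarrow> nat \<Rightarrow> nat \<Rightarrow> real)" where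
  "sym_cp3 r U = (\<lambda>i j k. \<Sum>p<r. U i p * U j p * U k p)"

definition tensor_frob :: "nat \<Rightarrow> (nat \<Rightarrow> nat \<Rightarrow> nat \<Rightarrow> real) \<Rightarrow> real" where
  "tensor_frob n T = sqrt (\<Sum>i<n. \<Sum>j<n. \<Sum>k<n. (T i j k)\<^sup>2)"

definition mat_frob :: "nat \<Rightarrow> nat \<Rightarrow> (nat \<Rightarrow> nat \<Rightarrow> real) \<Rightarrow> real" where
  "mat_frob m n A = sqrt (\<Sum>i<m. \<Sum>j<n. (A i j)\<^sup>2)"

definition vec_norm :: "nat \<Rightarrow> (nat \<Rightarrow> real) \<Rightarrow> real" where
  "vec_norm n x = sqrt (\<Sum>i<n. (x i)\<^sup>2)"

definition inner_n :: "nat \<Rightarrow> (nat \<Rightarrow> real) \<Rightarrow> (nat \<Rightarrow> real) \<Rightarrow> real" where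
  "inner_n n x y = (\<Sum>i<n. x i * y i)"

definition spec_norm :: "nat \<Rightarrow> nat \<Rightarrow> (nat \<Rightarrow> nat \<Rightarrow> real) \<Rightarrow> real" where
  "spec_norm m n A = Sup {vec_norm m (\<lambda>i. \<Sum>j<n. A i j * x j) | x. vec_norm n x \<le> 1}"

definition col :: "(nat \<Rightarrow> nat \<Rightarrow> real) \<Rightarrow> nat \<Rightarrow> (nat \<Rightarrow> real)" where
  "col A p = (\<lambda>i. A i p)"

end

theory Submission
  imports Defs "HOL-Analysis.L2_Norm" "HOL-Real_Asymp.Real_Asymp"
begin

text \<open>Align the columns of \<open>U\<close> with those of \<open>U\<^sup>\<star>\<close> via \<open>\<sigma>\<close>, so that \<open>U = U\<^sup>\<star> + H\<close> column by
  column. Then \<open>T - T\<^sup>\<star>\<close> splits into a part \<open>L\<close> linear in \<open>H\<close>, a quadratic part of norm at most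
  \<open>3 chigh \<parallel>H\<parallel>\<^sup>2\<close> and a cubic part of norm at most \<open>\<parallel>H\<parallel>\<^sup>3\<close>; the smallness of \<open>\<parallel>H\<parallel>\<close> makes the
  last two small multiples of \<open>clow\<^sup>2 \<parallel>H\<parallel>\<close>. For the linear part, \<open>\<parallel>L\<parallel>\<^sup>2 = 3 S1 + 6 S2\<close>: by (A3),
  applied to the rows of \<open>H diag(c)\<^sup>2\<close>, \<open>S1\<close> equals \<open>Y = \<Sum>\<^sub>p c\<^sub>p\<^sup>4 \<parallel>h\<^sub>p\<parallel>\<^sup>2\<close> up to a factor
  \<open>1 \<plusminus> \<epsilon>\<close>, and by (A1) and (A2) the cross term satisfies \<open>S2 \<ge> -g \<beta>\<^sup>2 Y\<close>. Since
  \<open>r = O(n\<^sup>1\<^sup>.\<^sup>2\<^sup>5)\<close>, the polylogarithmic factor makes \<open>\<epsilon>\<close> and \<open>g \<beta>\<^sup>2\<close> as small as needed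
  once \<open>n\<close> is large.\<close>

definition rank3_sum :: "nat \<Rightarrow> (nat \<Rightarrow> nat \<Rightarrow> real) \<Rightarrow> (nat \<Rightarrow> nat \<Rightarrow> real)
    \<Rightarrow> (nat \<Rightarrow> nat \<Rightarrow> real) \<Rightarrow> nat \<Rightarrow> nat \<Rightarrow> nat \<Rightarrow> real" where
  "rank3_sum r a b c = (\<lambda>i j l. \<Sum>p<r. a p i * b p j * c p l)"

definition tensor_inner :: "nat \<Rightarrow> (nat \<Rightarrow> nat \<Rightarrow> nat \<Rightarrow> real) \<Rightarrow> (nat \<Rightarrow> nat \<Rightarrow> nat \<Rightarrow> real) \<Rightarrow> real" where
  "tensor_inner n X Y = (\<Sum>i<n. \<Sum>j<n. \<Sum>l<n. X i j l * Y i j l)"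

lemma sum_rotate3:
  "(\<Sum>x\<in>A. \<Sum>y\<in>B. \<Sum>z\<in>C. f x y z) = (\<Sum>y\<in>B. \<Sum>z\<in>C. \<Sum>x\<in>A. f x y z)"
  by (rule trans[OF sum.swap], rule sum.cong[OF refl], rule sum.swap)

lemma sum_product3:
  "(\<Sum>i\<in>A. x i) * (\<Sum>j\<in>B. y j) * (\<Sum>l\<in>C. z l) = (\<Sum>i\<in>A. \<Sum>j\<in>B. \<Sum>l\<in>C. x i * y j * (z l :: real))"
  unfolding sum_distrib_right
  by (rule sum.cong[OF refl]) (simp add: sum_distrib_left sum_distrib_right mult.assoc sum.swap[of _ C])

lemma tensor_inner_rank3_sum:
  "tensor_inner n (rank3_sum r a b c) (rank3_sum r d e f) =
   (\<Sum>p<r. \<Sum>q<r. inner_n n (a p) (d q) * inner_n n (b p) (e q) * inner_n n (c p) (f q))"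
proof -
  have "tensor_inner n (rank3_sum r a b c) (rank3_sum r d e f) =
     (\<Sum>i<n. \<Sum>j<n. \<Sum>l<n. \<Sum>p<r. \<Sum>q<r. (a p i * d q i) * (b p j * e q j) * (c p l * f q l))"
    unfolding tensor_inner_def rank3_sum_def sum_product
    by (rule sum.cong[OF refl])+ (simp add: mult_ac)
  also have "\<dots> = (\<Sum>i<n. \<Sum>j<n. \<Sum>p<r. \<Sum>q<r. \<Sum>l<n. (a p i * d q i) * (b p j * e q j) * (c p l * f q l))"
    by (rule sum.cong[OF refl], rule sum.cong[OF refl], rule sum_rotate3)
  also have "\<dots> = (\<Sum>i<n. \<Sum>p<r. \<Sum>q<r. \<Sum>j<n. \<Sum>l<n. (a p i * d q i) * (b p j * e q j) * (c p l * f q l))"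
    by (rule sum.cong[OF refl], rule sum_rotate3)
  also have "\<dots> = (\<Sum>p<r. \<Sum>q<r. \<Sum>i<n. \<Sum>j<n. \<Sum>l<n. (a p i * d q i) * (b p j * e q j) * (c p l * f q l))"
    by (rule sum_rotate3)
  also have "\<dots> = (\<Sum>p<r. \<Sum>q<r. inner_n n (a p) (d q) * inner_n n (b p) (e q) * inner_n n (c p) (f q))"
    unfolding inner_n_def sum_product3 by simp
  finally show ?thesis .
qed

lemma tensor_inner_add_left:
  "tensor_inner n (\<lambda>i j l. X i j l + Y i j l) Z = tensor_inner n X Z + tensor_inner n Y Z"
  unfolding tensor_inner_def by (simp add: distrib_right sum.distrib)

lemma tensor_inner_add_right:
  "tensor_inner n Z (\<lambda>i j l. X i j l + Y i j l) = tensor_inner n Z X + tensor_inner n Z Y"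
  unfolding tensor_inner_def by (simp add: distrib_left sum.distrib)

lemma tensor_frob_eq_sqrt_inner: "tensor_frob n X = sqrt (tensor_inner n X X)"
  unfolding tensor_frob_def tensor_inner_def by (simp add: power2_eq_square)

lemma tensor_frob_nonneg: "0 \<le> tensor_frob n X"
  unfolding tensor_frob_def by (simp add: sum_nonneg)

lemma tensor_frob_uminus: "tensor_frob n (\<lambda>i j l. - X i j l) = tensor_frob n X"
  unfolding tensor_frob_def by simp

lemma tensor_frob_add_le:
  "tensor_frob n (\<lambda>i j l. X i j l + Y i j l) \<le> tensor_frob n X + tensor_frob n Y"
proof -
  define I where "I = {..<n} \<times> {..<n} \<times> {..<n}"
  have L2: "tensor_frob n Z = L2_set (\<lambda>(i, j, l). Z i j l) I" for Z
    unfolding tensor_frob_def L2_set_def I_def by (simp add: sum.cartesian_product case_prod_beta)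
  have "L2_set (\<lambda>(i, j, l). X i j l + Y i j l) I
      = L2_set (\<lambda>x. (\<lambda>(i, j, l). X i j l) x + (\<lambda>(i, j, l). Y i j l) x) I"
    by (rule L2_set_cong) auto
  also have "\<dots> \<le> L2_set (\<lambda>(i, j, l). X i j l) I + L2_set (\<lambda>(i, j, l). Y i j l) I"
    by (rule L2_set_triangle_ineq)
  finally show ?thesis unfolding L2 .
qed

lemma tensor_frob_add3_le:
  "tensor_frob n (\<lambda>i j l. X i j l + Y i j l + Z i j l) \<le> tensor_frob n X + tensor_frob n Y + tensor_frob n Z"
  using tensor_frob_add_le[of n "\<lambda>i j l. X i j l + Y i j l" Z] tensor_frob_add_le[of n X Y] by simp

lemma vec_norm_nonneg: "0 \<le> vec_norm n x"
  unfolding vec_norm_def by (simp add: sum_nonneg)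

lemma power2_vec_norm: "(vec_norm n x)\<^sup>2 = (\<Sum>i<n. (x i)\<^sup>2)"
  unfolding vec_norm_def by (simp add: sum_nonneg)

lemma abs_inner_n_le: "\<bar>inner_n n x y\<bar> \<le> vec_norm n x * vec_norm n y"
proof -
  have "\<bar>inner_n n x y\<bar> \<le> (\<Sum>i<n. \<bar>x i\<bar> * \<bar>y i\<bar>)"
    unfolding inner_n_def abs_mult[symmetric] by (rule sum_abs)
  also have "\<dots> \<le> L2_set x {..<n} * L2_set y {..<n}"
    by (rule L2_set_mult_ineq)
  finally show ?thesis
    by (simp add: vec_norm_def L2_set_def)
qed

lemma vec_norm_scale: "vec_norm n (\<lambda>j. a * x j) = \<bar>a\<bar> * vec_norm n x"
proof -
  have "(\<Sum>j<n. (a * x j)\<^sup>2) = a\<^sup>2 * (\<Sum>j<n. (x j)\<^sup>2)"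
    by (simp add: power_mult_distrib sum_distrib_left)
  thus ?thesis unfolding vec_norm_def by (simp add: real_sqrt_mult)
qed

lemma vec_norm_eq_0D: "vec_norm n x = 0 \<Longrightarrow> j < n \<Longrightarrow> x j = 0"
  unfolding vec_norm_def by (simp add: sum_nonneg sum_nonneg_eq_0_iff)

lemma vec_norm_matvec_le_frob:
  "vec_norm m (\<lambda>i. \<Sum>j<n. A i j * x j) \<le> sqrt (\<Sum>i<m. \<Sum>j<n. (A i j)\<^sup>2) * vec_norm n x"
proof -
  have "(\<Sum>j<n. A i j * x j)\<^sup>2 \<le> (\<Sum>j<n. (A i j)\<^sup>2) * (vec_norm n x)\<^sup>2" for i
  proof -
    have "\<bar>\<Sum>j<n. A i j * x j\<bar> \<le> vec_norm n (A i) * vec_norm n x"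
      using abs_inner_n_le[of n "A i" x] unfolding inner_n_def .
    hence "(\<Sum>j<n. A i j * x j)\<^sup>2 \<le> (vec_norm n (A i) * vec_norm n x)\<^sup>2"
      by (metis abs_ge_zero power2_abs power_mono)
    thus ?thesis by (simp add: power_mult_distrib power2_vec_norm)
  qed
  hence "(\<Sum>i<m. (\<Sum>j<n. A i j * x j)\<^sup>2) \<le> (\<Sum>i<m. \<Sum>j<n. (A i j)\<^sup>2) * (vec_norm n x)\<^sup>2"
    by (simp add: sum_distrib_right sum_mono)
  hence "sqrt (\<Sum>i<m. (\<Sum>j<n. A i j * x j)\<^sup>2) \<le> sqrt ((\<Sum>i<m. \<Sum>j<n. (A i j)\<^sup>2) * (vec_norm n x)\<^sup>2)"
    using real_sqrt_le_mono by blast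
  thus ?thesis unfolding vec_norm_def[of m]
    by (simp add: real_sqrt_mult abs_of_nonneg[OF vec_norm_nonneg])
qed

lemma vec_norm_matvec_le_spec_norm:
  "vec_norm m (\<lambda>i. \<Sum>j<n. A i j * x j) \<le> spec_norm m n A * vec_norm n x"
proof (cases "vec_norm n x = 0")
  case True
  hence "(\<lambda>i. \<Sum>j<n. A i j * x j) = (\<lambda>i. 0)"
    using vec_norm_eq_0D[OF True] by simp
  thus ?thesis using True by (simp add: vec_norm_def)
next
  case False
  define S where "S = {vec_norm m (\<lambda>i. \<Sum>j<n. A i j * x j) | x. vec_norm n x \<le> 1}"
  define F where "F = sqrt (\<Sum>i<m. \<Sum>j<n. (A i j)\<^sup>2)"
  define t where "t = vec_norm n x"
  define y where "y = (\<lambda>j. (1/t) * x j)"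
  have t: "t > 0" using False vec_norm_nonneg unfolding t_def by (metis less_eq_real_def)
  have "bdd_above S"
  proof (rule bdd_aboveI)
    fix s assume "s \<in> S"
    then obtain z where "s = vec_norm m (\<lambda>i. \<Sum>j<n. A i j * z j)" "vec_norm n z \<le> 1"
      unfolding S_def by blast
    moreover have "0 \<le> F" unfolding F_def by (simp add: sum_nonneg)
    ultimately show "s \<le> F"
      using vec_norm_matvec_le_frob[where A = A and x = z and m = m and n = n] mult_left_le[of "vec_norm n z" F]
      unfolding F_def by linarith
  qed
  moreover have "vec_norm n y = 1" unfolding y_def vec_norm_scale using t by (simp add: t_def)
  hence "vec_norm m (\<lambda>i. \<Sum>j<n. A i j * y j) \<in> S" unfolding S_def by auto
  ultimately have "vec_norm m (\<lambda>i. \<Sum>j<n. A i j * y j) \<le> spec_norm m n A"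
    unfolding spec_norm_def S_def[symmetric] by (intro cSup_upper)
  moreover have "(\<lambda>i. \<Sum>j<n. A i j * x j) = (\<lambda>i. t * (\<Sum>j<n. A i j * y j))"
    unfolding y_def using t by (simp add: sum_distrib_left)
  ultimately show ?thesis using t by (simp add: vec_norm_scale t_def mult.commute)
qed

lemma abs_quadratic_form_le_spec_norm:
  assumes "spec_norm r r E \<le> \<epsilon>"
  shows "\<bar>\<Sum>p<r. \<Sum>q<r. x p * E p q * x q\<bar> \<le> \<epsilon> * (\<Sum>p<r. (x p)\<^sup>2)"
proof -
  have form: "(\<Sum>p<r. \<Sum>q<r. x p * E p q * x q) = inner_n r x (\<lambda>p. \<Sum>q<r. E p q * x q)"
    unfolding inner_n_def by (simp add: sum_distrib_left mult.assoc)
  have Ex: "vec_norm r (\<lambda>p. \<Sum>q<r. E p q * x q) \<le> \<epsilon> * vec_norm r x"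
    using vec_norm_matvec_le_spec_norm[where A = E and x = x] assms vec_norm_nonneg[of r x]
    by (meson mult_right_mono order.trans)
  have "\<bar>inner_n r x (\<lambda>p. \<Sum>q<r. E p q * x q)\<bar> \<le> vec_norm r x * vec_norm r (\<lambda>p. \<Sum>q<r. E p q * x q)"
    by (rule abs_inner_n_le)
  also have "\<dots> \<le> vec_norm r x * (\<epsilon> * vec_norm r x)"
    using Ex vec_norm_nonneg by (rule mult_left_mono)
  also have "\<dots> = \<epsilon> * (\<Sum>p<r. (x p)\<^sup>2)"
    using power2_vec_norm[of r x] by (simp add: power2_eq_square mult_ac)
  finally show ?thesis unfolding form .
qed

lemma sum_power2_transpose_matvec_le:
  assumes "spec_norm n r M \<le> \<beta>"
  shows "(\<Sum>q<r. (\<Sum>i<n. h i * M i q)\<^sup>2) \<le> \<beta>\<^sup>2 * (vec_norm n h)\<^sup>2"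
proof -
  define t where "t = (\<lambda>q. \<Sum>i<n. h i * M i q)"
  have "(vec_norm r t)\<^sup>2 = (\<Sum>q<r. \<Sum>i<n. h i * M i q * t q)"
    unfolding power2_vec_norm t_def by (simp add: power2_eq_square sum_distrib_right)
  also have "\<dots> = inner_n n h (\<lambda>i. \<Sum>q<r. M i q * t q)"
    unfolding inner_n_def by (subst sum.swap) (simp add: sum_distrib_left mult.assoc)
  also have "\<dots> \<le> vec_norm n h * vec_norm n (\<lambda>i. \<Sum>q<r. M i q * t q)"
    using abs_inner_n_le abs_le_D1 by blast
  also have "\<dots> \<le> vec_norm n h * (\<beta> * vec_norm r t)"
    using vec_norm_matvec_le_spec_norm[where A = M and x = t] assms vec_norm_nonneg[of r t]
    by (meson mult_left_mono mult_right_mono order.trans vec_norm_nonneg)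
  finally have "vec_norm r t * vec_norm r t \<le> vec_norm r t * (\<beta> * vec_norm n h)"
    by (simp add: power2_eq_square mult_ac)
  hence "(vec_norm r t)\<^sup>2 \<le> (\<beta> * vec_norm n h)\<^sup>2"
    using vec_norm_nonneg[of r t]
    by (cases "vec_norm r t = 0") (auto simp: mult_le_cancel_left_pos intro: power_mono)
  thus ?thesis by (simp add: power2_vec_norm t_def power_mult_distrib)
qed

lemma mult_ge_neg_half_sum_squares:
  fixes X Z G g :: real
  assumes "\<bar>G\<bar> \<le> g"
  shows "- (g / 2) * (X\<^sup>2 + Z\<^sup>2) \<le> X * Z * G"
proof -
  have "\<bar>X\<bar> * \<bar>Z\<bar> \<le> (X\<^sup>2 + Z\<^sup>2) / 2"
    using sum_squares_ge_zero[of "\<bar>X\<bar> - \<bar>Z\<bar>" 0] by (simp add: power2_eq_square algebra_simps)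
  hence "\<bar>X * Z * G\<bar> \<le> (X\<^sup>2 + Z\<^sup>2) / 2 * g"
    unfolding abs_mult using assms by (intro mult_mono) auto
  thus ?thesis by (simp add: abs_le_iff mult_ac)
qed

locale cp3_perturbation =
  fixes n r :: nat and u h :: "nat \<Rightarrow> nat \<Rightarrow> real" and c :: "nat \<Rightarrow> real"
    and clow chigh g \<beta> \<epsilon> :: real
  assumes c_lower: "\<And>p. p < r \<Longrightarrow> clow \<le> c p"
    and c_upper: "\<And>p. p < r \<Longrightarrow> c p \<le> chigh"
    and clow_pos: "0 < clow"
    and clow_le_chigh: "clow \<le> chigh"
    and u_unit: "\<And>p. p < r \<Longrightarrow> vec_norm n (u p) = 1"
    and u_incoherent: "\<And>p q. p < r \<Longrightarrow> q < r \<Longrightarrow> p \<noteq> q \<Longrightarrow> \<bar>inner_n n (u p) (u q)\<bar> \<le> g"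
    and g_nonneg: "0 \<le> g"
    and u_spec_norm: "spec_norm n r (\<lambda>i p. u p i) \<le> \<beta>"
    and gram_sq_spec_norm: "spec_norm r r (\<lambda>p q. inner_n n (u p) (u q) * inner_n n (u p) (u q)
                              - (if p = q then 1 else 0)) \<le> \<epsilon>"
begin

text \<open>The vectors \<open>u p\<close>, \<open>v p\<close> and \<open>h p\<close> are the \<open>p\<close>-th columns of \<open>\<hat>U\<close>, \<open>U\<^sup>\<star>\<close> and \<open>H\<close>,
  with \<open>c p = (c\<^sub>p\<^sup>\<star>)\<^sup>1\<^sup>/\<^sup>3\<close>.\<close>

definition G where "G p q = inner_n n (u p) (u q)"
definition v where "v p i = c p * u p i"
definition a where "a p = vec_norm n (h p)"
definition S where "S = (\<Sum>p<r. (a p)\<^sup>2)"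
definition Y where "Y = (\<Sum>p<r. (c p)^4 * (a p)\<^sup>2)"
definition S1 where "S1 = (\<Sum>p<r. \<Sum>q<r. inner_n n (h p) (h q) * inner_n n (v p) (v q) * inner_n n (v p) (v q))"
definition S2 where "S2 = (\<Sum>p<r. \<Sum>q<r. inner_n n (h p) (v q) * inner_n n (v p) (h q) * inner_n n (v p) (v q))"

lemma c_pos: "p < r \<Longrightarrow> 0 < c p"
  using c_lower clow_pos by force

lemma chigh_pos: "0 < chigh"
  using clow_pos clow_le_chigh by linarith

lemma G_diag: "p < r \<Longrightarrow> G p p = 1"
  using u_unit[of p] unfolding G_def inner_n_def vec_norm_def by (simp add: power2_eq_square)

lemma abs_G_le_1: "p < r \<Longrightarrow> q < r \<Longrightarrow> \<bar>G p q\<bar> \<le> 1"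
  using abs_inner_n_le[of n "u p" "u q"] u_unit unfolding G_def by simp

lemma inner_v_v: "inner_n n (v p) (v q) = c p * c q * G p q"
  unfolding inner_n_def v_def G_def by (simp add: sum_distrib_left mult_ac)

lemma abs_inner_v_v_le: assumes "p < r" "q < r" shows "\<bar>inner_n n (v p) (v q)\<bar> \<le> chigh\<^sup>2"
proof -
  have "\<bar>inner_n n (v p) (v q)\<bar> = c p * c q * \<bar>G p q\<bar>"
    unfolding inner_v_v using c_pos[OF assms(1)] c_pos[OF assms(2)] by (simp add: abs_mult)
  also have "\<dots> \<le> chigh * chigh * 1"
    using assms c_pos c_upper abs_G_le_1 chigh_pos by (intro mult_mono) (auto intro: less_imp_le)
  finally show ?thesis by (simp add: power2_eq_square)
qed

lemma a_nonneg: "0 \<le> a p"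
  unfolding a_def by (rule vec_norm_nonneg)

lemma power2_a: "(a p)\<^sup>2 = (\<Sum>i<n. (h p i)\<^sup>2)"
  unfolding a_def by (rule power2_vec_norm)

lemma abs_inner_h_h_le: "\<bar>inner_n n (h p) (h q)\<bar> \<le> a p * a q"
  unfolding a_def by (rule abs_inner_n_le)

lemma S_nonneg: "0 \<le> S"
  unfolding S_def by (simp add: sum_nonneg)

lemma power2_mult_sqrt_S: "(k * sqrt S)\<^sup>2 = k\<^sup>2 * S"
  using S_nonneg by (simp add: power_mult_distrib)

lemma a_le_sqrt_S: "p < r \<Longrightarrow> a p \<le> sqrt S"
  using member_le_sum[of p "{..<r}" "\<lambda>p. (a p)\<^sup>2"] a_nonneg unfolding S_def
  by (simp add: real_le_rsqrt)

lemma S_eq_mat_frob: "S = (mat_frob n r (\<lambda>i p. h p i))\<^sup>2"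
  unfolding S_def power2_a mat_frob_def by (subst sum.swap) (simp add: sum_nonneg)

lemma Y_nonneg: "0 \<le> Y"
  unfolding Y_def by (simp add: sum_nonneg)

lemma Y_bounds: "clow^4 * S \<le> Y" "Y \<le> chigh^4 * S"
proof -
  have "clow^4 * (a p)\<^sup>2 \<le> (c p)^4 * (a p)\<^sup>2" if "p < r" for p
    using that c_lower clow_pos by (intro mult_right_mono power_mono) auto
  thus "clow^4 * S \<le> Y" unfolding S_def Y_def sum_distrib_left by (intro sum_mono) auto
  have "(c p)^4 * (a p)\<^sup>2 \<le> chigh^4 * (a p)\<^sup>2" if "p < r" for p
    using that c_upper c_pos by (intro mult_right_mono power_mono) (auto intro: less_imp_le)
  thus "Y \<le> chigh^4 * S" unfolding S_def Y_def sum_distrib_left by (intro sum_mono) auto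
qed

text \<open>Assumption (A3) controls \<open>S1\<close> through the rows \<open>x i\<close> of \<open>H diag(c)\<^sup>2\<close>.\<close>

definition E where "E p q = G p q * G p q - (if p = q then 1 else 0)"
definition x where "x i p = (c p)\<^sup>2 * h p i"

lemma Y_eq_sum_x: "Y = (\<Sum>i<n. \<Sum>p<r. (x i p)\<^sup>2)"
proof -
  have "Y = (\<Sum>p<r. \<Sum>i<n. (x i p)\<^sup>2)"
    unfolding Y_def power2_a x_def sum_distrib_left
    by (intro sum.cong refl) (simp add: power2_eq_square power4_eq_xxxx mult_ac)
  also have "\<dots> = (\<Sum>i<n. \<Sum>p<r. (x i p)\<^sup>2)" by (rule sum.swap)
  finally show ?thesis .
qed

lemma quadratic_form_G_sq:
  "(\<Sum>p<r. \<Sum>q<r. y p * (G p q * G p q) * y q) = (\<Sum>p<r. \<Sum>q<r. y p * E p q * y q) + (\<Sum>p<r. (y p)\<^sup>2)"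
proof -
  have "(\<Sum>p<r. \<Sum>q<r. y p * (G p q * G p q) * y q)
      = (\<Sum>p<r. \<Sum>q<r. y p * E p q * y q + (if q = p then y p * y p else 0))"
    unfolding E_def by (intro sum.cong refl) (auto simp: algebra_simps)
  thus ?thesis by (simp add: sum.distrib power2_eq_square)
qed

lemma S1_eq: "S1 = (\<Sum>i<n. \<Sum>p<r. \<Sum>q<r. x i p * E p q * x i q) + Y"
proof -
  have "S1 = (\<Sum>p<r. \<Sum>q<r. \<Sum>i<n. x i p * (G p q * G p q) * x i q)"
    unfolding S1_def inner_v_v unfolding inner_n_def x_def sum_distrib_right
    by (intro sum.cong refl) (simp add: power2_eq_square mult_ac)
  also have "\<dots> = (\<Sum>i<n. \<Sum>p<r. \<Sum>q<r. x i p * (G p q * G p q) * x i q)"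
    by (rule sum_rotate3[symmetric])
  also have "\<dots> = (\<Sum>i<n. \<Sum>p<r. \<Sum>q<r. x i p * E p q * x i q) + Y"
    unfolding quadratic_form_G_sq by (simp add: sum.distrib Y_eq_sum_x)
  finally show ?thesis .
qed

lemma S1_bounds: "(1 - \<epsilon>) * Y \<le> S1" "S1 \<le> (1 + \<epsilon>) * Y"
proof -
  have E: "spec_norm r r E \<le> \<epsilon>"
    using gram_sq_spec_norm unfolding E_def G_def .
  have "\<bar>\<Sum>i<n. \<Sum>p<r. \<Sum>q<r. x i p * E p q * x i q\<bar> \<le> (\<Sum>i<n. \<bar>\<Sum>p<r. \<Sum>q<r. x i p * E p q * x i q\<bar>)"
    by (rule sum_abs)
  also have "\<dots> \<le> (\<Sum>i<n. \<epsilon> * (\<Sum>p<r. (x i p)\<^sup>2))"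
    by (intro sum_mono abs_quadratic_form_le_spec_norm E)
  also have "\<dots> = \<epsilon> * Y" by (simp add: Y_eq_sum_x sum_distrib_left)
  finally have "\<bar>S1 - Y\<bar> \<le> \<epsilon> * Y" using S1_eq by simp
  thus "(1 - \<epsilon>) * Y \<le> S1" "S1 \<le> (1 + \<epsilon>) * Y" by (auto simp: algebra_simps abs_le_iff)
qed

definition B where "B p q = inner_n n (h p) (u q)"

lemma S2_summand:
  "inner_n n (h p) (v q) * inner_n n (v p) (h q) * inner_n n (v p) (v q)
   = ((c p)\<^sup>2 * B p q) * ((c q)\<^sup>2 * B q p) * G p q"
proof -
  have "inner_n n (h p) (v q) = c q * B p q" "inner_n n (v p) (h q) = c p * B q p"
    unfolding inner_n_def v_def B_def by (simp_all add: sum_distrib_left mult_ac)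
  thus ?thesis unfolding inner_v_v by (simp add: power2_eq_square mult_ac)
qed

lemma S2_summand_lower:
  assumes "p < r" "q < r"
  shows "- (g / 2) * (((c p)\<^sup>2 * B p q)\<^sup>2 + ((c q)\<^sup>2 * B q p)\<^sup>2)
    \<le> inner_n n (h p) (v q) * inner_n n (v p) (h q) * inner_n n (v p) (v q)"
proof (cases "p = q")
  case True
  have "- (g / 2) * (((c p)\<^sup>2 * B p q)\<^sup>2 + ((c q)\<^sup>2 * B q p)\<^sup>2) \<le> 0"
    using g_nonneg by simp
  also have "0 \<le> ((c p)\<^sup>2 * B p q) * ((c q)\<^sup>2 * B q p) * G p q"
    using True G_diag[OF assms(1)] by simp
  finally show ?thesis unfolding S2_summand .
next
  case False
  show ?thesis unfolding S2_summand
    using u_incoherent[OF assms False] unfolding G_def[symmetric] by (rule mult_ge_neg_half_sum_squares)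
qed

lemma sum_power2_B_le: "p < r \<Longrightarrow> (\<Sum>q<r. (B p q)\<^sup>2) \<le> \<beta>\<^sup>2 * (a p)\<^sup>2"
  unfolding B_def a_def inner_n_def using sum_power2_transpose_matvec_le[OF u_spec_norm, of "h p"] by simp

lemma S2_lower: "- (g * \<beta>\<^sup>2 * Y) \<le> S2"
proof -
  define X where "X p q = ((c p)\<^sup>2 * B p q)\<^sup>2" for p q
  have sum_X: "(\<Sum>p<r. \<Sum>q<r. X p q) \<le> \<beta>\<^sup>2 * Y"
  proof -
    have "(\<Sum>p<r. \<Sum>q<r. X p q) = (\<Sum>p<r. (c p)^4 * (\<Sum>q<r. (B p q)\<^sup>2))"
      unfolding X_def by (simp add: sum_distrib_left power_mult_distrib flip: power_mult)
    also have "\<dots> \<le> (\<Sum>p<r. (c p)^4 * (\<beta>\<^sup>2 * (a p)\<^sup>2))"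
      by (intro sum_mono mult_left_mono sum_power2_B_le) auto
    also have "\<dots> = \<beta>\<^sup>2 * Y" unfolding Y_def by (simp add: sum_distrib_left mult_ac)
    finally show ?thesis .
  qed
  have "(\<Sum>p<r. \<Sum>q<r. X p q + X q p) = (\<Sum>p<r. \<Sum>q<r. X p q) + (\<Sum>p<r. \<Sum>q<r. X q p)"
    by (simp add: sum.distrib)
  also have "(\<Sum>p<r. \<Sum>q<r. X q p) = (\<Sum>p<r. \<Sum>q<r. X p q)"
    by (rule sum.swap)
  finally have sym: "(\<Sum>p<r. \<Sum>q<r. X p q + X q p) = 2 * (\<Sum>p<r. \<Sum>q<r. X p q)"
    by simp
  have "(\<Sum>p<r. \<Sum>q<r. - (g / 2) * (X p q + X q p)) = - (g / 2) * (\<Sum>p<r. \<Sum>q<r. X p q + X q p)"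
    by (simp only: sum_distrib_left)
  also have "\<dots> = - g * (\<Sum>p<r. \<Sum>q<r. X p q)"
    unfolding sym by simp
  moreover have "- (g * \<beta>\<^sup>2 * Y) \<le> - g * (\<Sum>p<r. \<Sum>q<r. X p q)"
    using sum_X g_nonneg by (simp add: mult_left_mono mult.assoc)
  moreover have "(\<Sum>p<r. \<Sum>q<r. - (g / 2) * (X p q + X q p)) \<le> S2"
    unfolding S2_def X_def by (intro sum_mono S2_summand_lower) auto
  ultimately show ?thesis by linarith
qed

lemma sum_quadratic_summands_le:
  "(\<Sum>p<r. \<Sum>q<r. inner_n n (h p) (h q) * inner_n n (h p) (h q) * inner_n n (v p) (v q)) \<le> chigh\<^sup>2 * S\<^sup>2"
proof -
  have "inner_n n (h p) (h q) * inner_n n (h p) (h q) * inner_n n (v p) (v q) \<le> (a p)\<^sup>2 * (a q)\<^sup>2 * chigh\<^sup>2"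
    if "p < r" "q < r" for p q
  proof -
    have "\<bar>inner_n n (h p) (h q)\<bar>\<^sup>2 \<le> (a p * a q)\<^sup>2"
      using abs_inner_h_h_le by (rule power_mono) simp
    hence "\<bar>inner_n n (h p) (h q) * inner_n n (h p) (h q)\<bar> \<le> (a p)\<^sup>2 * (a q)\<^sup>2"
      by (simp add: abs_mult power2_eq_square mult_ac)
    hence "\<bar>inner_n n (h p) (h q) * inner_n n (h p) (h q) * inner_n n (v p) (v q)\<bar> \<le> (a p)\<^sup>2 * (a q)\<^sup>2 * chigh\<^sup>2"
      unfolding abs_mult[of _ "inner_n n (v p) (v q)"] using abs_inner_v_v_le[OF that]
      by (intro mult_mono) auto
    thus ?thesis by linarith
  qed
  hence "(\<Sum>p<r. \<Sum>q<r. inner_n n (h p) (h q) * inner_n n (h p) (h q) * inner_n n (v p) (v q))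
      \<le> (\<Sum>p<r. \<Sum>q<r. (a p)\<^sup>2 * (a q)\<^sup>2 * chigh\<^sup>2)"
    by (intro sum_mono) auto
  also have "\<dots> = chigh\<^sup>2 * S\<^sup>2"
    unfolding S_def power2_eq_square[of "sum _ _"] sum_product
    by (simp add: sum_distrib_left sum_distrib_right mult_ac)
  finally show ?thesis .
qed

lemma sum_cubic_summands_le:
  "(\<Sum>p<r. \<Sum>q<r. inner_n n (h p) (h q) * inner_n n (h p) (h q) * inner_n n (h p) (h q)) \<le> (sqrt S)^6"
proof -
  have "(\<Sum>p<r. \<Sum>q<r. inner_n n (h p) (h q) * inner_n n (h p) (h q) * inner_n n (h p) (h q))
      \<le> (\<Sum>p<r. \<Sum>q<r. (a p)^3 * (a q)^3)"
  proof (intro sum_mono)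
    fix p q
    have "inner_n n (h p) (h q) * inner_n n (h p) (h q) * inner_n n (h p) (h q)
        \<le> \<bar>inner_n n (h p) (h q) * inner_n n (h p) (h q) * inner_n n (h p) (h q)\<bar>"
      by (rule abs_ge_self)
    also have "\<dots> = \<bar>inner_n n (h p) (h q)\<bar> ^ 3"
      by (simp add: abs_mult power3_eq_cube)
    also have "\<dots> \<le> (a p * a q) ^ 3" by (intro power_mono abs_inner_h_h_le) auto
    finally show "inner_n n (h p) (h q) * inner_n n (h p) (h q) * inner_n n (h p) (h q) \<le> (a p)^3 * (a q)^3"
      by (simp add: power_mult_distrib)
  qed
  also have "\<dots> = (\<Sum>p<r. (a p)^3)\<^sup>2"
    unfolding power2_eq_square sum_product by (simp add: sum_distrib_left)
  also have "\<dots> \<le> (sqrt S * S)\<^sup>2"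
  proof (rule power_mono)
    have "(a p)^3 \<le> sqrt S * (a p)\<^sup>2" if "p < r" for p
      using a_le_sqrt_S[OF that] a_nonneg[of p] mult_right_mono[of "a p" "sqrt S" "(a p)\<^sup>2"]
      by (simp add: power3_eq_cube power2_eq_square mult_ac)
    thus "(\<Sum>p<r. (a p)^3) \<le> sqrt S * S"
      unfolding S_def sum_distrib_left by (intro sum_mono) auto
  qed (simp add: a_nonneg sum_nonneg)
  also have "\<dots> = (sqrt S)^6" using S_nonneg by (simp add: power_mult_distrib power2_eq_square eval_nat_numeral)
  finally show ?thesis .
qed

definition D where "D = (\<lambda>i j l. (\<Sum>p<r. (h p i + v p i) * (h p j + v p j) * (h p l + v p l))
                              - (\<Sum>p<r. v p i * v p j * v p l))"
definition D_lin where "D_lin = (\<lambda>i j l. rank3_sum r h v v i j l + rank3_sum r v h v i j l + rank3_sum r v v h i j l)"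
definition D_quad where "D_quad = (\<lambda>i j l. rank3_sum r h h v i j l + rank3_sum r h v h i j l + rank3_sum r v h h i j l)"
definition D_cub where "D_cub = rank3_sum r h h h"

lemma D_split: "D = (\<lambda>i j l. D_lin i j l + D_quad i j l + D_cub i j l)"
  unfolding D_def D_lin_def D_quad_def D_cub_def rank3_sum_def
  by (intro ext) (simp add: sum_subtractf[symmetric] sum.distrib[symmetric] algebra_simps)

lemma D_eq_sym_cp3_diff:
  "D = (\<lambda>i j l. sym_cp3 r (\<lambda>i p. h p i + v p i) i j l - (\<Sum>p<r. c p ^ 3 * u p i * u p j * u p l))"
  unfolding D_def sym_cp3_def v_def by (simp add: power3_eq_cube mult_ac)

lemma tensor_inner_D_lin: "tensor_inner n D_lin D_lin = 3 * S1 + 6 * S2"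
  unfolding D_lin_def
  by (simp add: tensor_inner_add_left tensor_inner_add_right tensor_inner_rank3_sum S1_def S2_def mult_ac)

lemma tensor_frob_D_lin_le: "tensor_frob n D_lin \<le> 3 * sqrt S1"
  using tensor_frob_add3_le[of n "rank3_sum r h v v" "rank3_sum r v h v" "rank3_sum r v v h"]
  unfolding D_lin_def by (simp add: tensor_frob_eq_sqrt_inner tensor_inner_rank3_sum S1_def mult_ac)

lemma tensor_frob_D_quad_le: "tensor_frob n D_quad \<le> 3 * chigh * S"
proof -
  have "tensor_frob n D_quad \<le> 3 * sqrt (\<Sum>p<r. \<Sum>q<r. inner_n n (h p) (h q) * inner_n n (h p) (h q) * inner_n n (v p) (v q))"
    using tensor_frob_add3_le[of n "rank3_sum r h h v" "rank3_sum r h v h" "rank3_sum r v h h"]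
    unfolding D_quad_def by (simp add: tensor_frob_eq_sqrt_inner tensor_inner_rank3_sum mult_ac)
  also have "\<dots> \<le> 3 * sqrt ((chigh * S)\<^sup>2)"
    using sum_quadratic_summands_le by (simp add: power_mult_distrib)
  finally show ?thesis using chigh_pos S_nonneg by simp
qed

lemma tensor_frob_D_cub_le: "tensor_frob n D_cub \<le> (sqrt S)^3"
proof -
  have "tensor_frob n D_cub
      = sqrt (\<Sum>p<r. \<Sum>q<r. inner_n n (h p) (h q) * inner_n n (h p) (h q) * inner_n n (h p) (h q))"
    unfolding D_cub_def by (simp add: tensor_frob_eq_sqrt_inner tensor_inner_rank3_sum)
  also have "\<dots> \<le> sqrt (((sqrt S)^3)\<^sup>2)"
    using sum_cubic_summands_le by (simp flip: power_mult)
  also have "\<dots> = (sqrt S)^3"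
    using S_nonneg by (intro real_sqrt_unique) auto
  finally show ?thesis .
qed

end

locale small_cp3_perturbation = cp3_perturbation +
  assumes eps_nonneg: "0 \<le> \<epsilon>" and eps_small: "\<epsilon> \<le> 1/100000"
    and g_beta_small: "g * \<beta>\<^sup>2 \<le> 1/10"
    and H_small: "sqrt S \<le> 7/100 * clow^4 / chigh^3"
begin

lemma sqrt_S_le_clow: "sqrt S \<le> 7/100 * clow"
proof -
  have "clow * clow^3 \<le> clow * chigh^3"
    using clow_le_chigh clow_pos by (intro mult_left_mono power_mono) auto
  hence "clow^4 / chigh^3 \<le> clow"
    using chigh_pos by (simp add: divide_le_eq power4_eq_xxxx power3_eq_cube mult_ac)
  thus ?thesis using H_small by linarith
qed

lemma chigh_sqrt_S_le: "chigh * sqrt S \<le> 7/100 * clow\<^sup>2"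
proof -
  have "clow\<^sup>2 * clow\<^sup>2 \<le> clow\<^sup>2 * chigh\<^sup>2"
    using clow_le_chigh clow_pos by (intro mult_left_mono power_mono) auto
  hence "clow^4 / chigh\<^sup>2 \<le> clow\<^sup>2"
    using chigh_pos by (simp add: divide_le_eq power2_eq_square power4_eq_xxxx mult_ac)
  moreover have "chigh * sqrt S \<le> 7/100 * (clow^4 / chigh\<^sup>2)"
    using mult_left_mono[OF H_small, of chigh] chigh_pos
    by (simp add: power3_eq_cube power2_eq_square field_simps)
  ultimately show ?thesis by linarith
qed

lemma tensor_frob_D_quad_small: "tensor_frob n D_quad \<le> 21/100 * clow\<^sup>2 * sqrt S"
proof -
  have "3 * chigh * S = 3 * (chigh * sqrt S) * sqrt S"
    using S_nonneg by (simp add: mult.assoc flip: power2_eq_square)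
  also have "\<dots> \<le> 3 * (7/100 * clow\<^sup>2) * sqrt S"
    using chigh_sqrt_S_le S_nonneg by (intro mult_right_mono) auto
  finally show ?thesis using tensor_frob_D_quad_le by linarith
qed

lemma tensor_frob_D_cub_small: "tensor_frob n D_cub \<le> 49/10000 * clow\<^sup>2 * sqrt S"
proof -
  have "(sqrt S)\<^sup>2 \<le> 49/10000 * clow\<^sup>2"
    using power_mono[OF sqrt_S_le_clow real_sqrt_ge_zero[OF S_nonneg], of 2]
    by (simp add: power_mult_distrib power_divide)
  hence "(sqrt S)\<^sup>2 * sqrt S \<le> 49/10000 * clow\<^sup>2 * sqrt S"
    using S_nonneg by (intro mult_right_mono) auto
  thus ?thesis using tensor_frob_D_cub_le by (simp add: power3_eq_cube power2_eq_square)
qed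

lemma tensor_frob_D_lin_upper: "tensor_frob n D_lin \<le> 3 * (1 + 1/200000) * chigh\<^sup>2 * sqrt S"
proof -
  have "S1 \<le> (1 + \<epsilon>) * (chigh^4 * S)"
    using S1_bounds(2) Y_bounds(2) eps_nonneg by (smt (verit) mult_left_mono)
  also have "\<dots> \<le> (1 + 1/200000)\<^sup>2 * (chigh^4 * S)"
    using eps_small S_nonneg chigh_pos by (intro mult_right_mono) (auto simp: power2_eq_square)
  also have "\<dots> = (((1 + 1/200000) * chigh\<^sup>2) * sqrt S)\<^sup>2"
    unfolding power2_mult_sqrt_S by (simp add: power_mult_distrib power_divide flip: power_mult)
  finally have "sqrt S1 \<le> sqrt ((((1 + 1/200000) * chigh\<^sup>2) * sqrt S)\<^sup>2)"
    by (rule real_sqrt_le_mono)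
  also have "\<dots> = (1 + 1/200000) * chigh\<^sup>2 * sqrt S"
    using S_nonneg by (intro real_sqrt_unique) auto
  finally show ?thesis using tensor_frob_D_lin_le by simp
qed

lemma tensor_frob_D_lin_lower: "1545/1000 * clow\<^sup>2 * sqrt S \<le> tensor_frob n D_lin"
proof -
  have "(1545/1000 * clow\<^sup>2 * sqrt S)\<^sup>2 = (1545/1000)\<^sup>2 * (clow^4 * S)"
    unfolding power2_mult_sqrt_S by (simp add: power_mult_distrib power_divide flip: power_mult)
  also have "\<dots> \<le> 239/100 * (clow^4 * S)"
    using S_nonneg clow_pos by (intro mult_right_mono) (auto simp: power2_eq_square)
  also have "\<dots> \<le> 239/100 * Y"
    using Y_bounds(1) by linarith
  also have "\<dots> \<le> (3 - 3 * \<epsilon> - 6 * (g * \<beta>\<^sup>2)) * Y"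
    using Y_nonneg eps_small g_beta_small by (intro mult_right_mono) auto
  also have "\<dots> \<le> tensor_inner n D_lin D_lin"
    using S1_bounds(1) S2_lower unfolding tensor_inner_D_lin by (simp add: algebra_simps)
  finally show ?thesis
    unfolding tensor_frob_eq_sqrt_inner using clow_pos S_nonneg by (intro real_le_rsqrt) auto
qed

lemma tensor_frob_D_upper: "(tensor_frob n D)\<^sup>2 \<le> 10.336 * chigh^4 * S"
proof -
  have "tensor_frob n D \<le> tensor_frob n D_lin + tensor_frob n D_quad + tensor_frob n D_cub"
    unfolding D_split by (rule tensor_frob_add3_le)
  also have "\<dots> \<le> 3 * (1 + 1/200000) * chigh\<^sup>2 * sqrt S + 21/100 * chigh\<^sup>2 * sqrt S + 49/10000 * chigh\<^sup>2 * sqrt S"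
  proof -
    have "clow\<^sup>2 * sqrt S \<le> chigh\<^sup>2 * sqrt S"
      using clow_le_chigh clow_pos S_nonneg by (intro mult_right_mono power_mono) auto
    thus ?thesis
      using tensor_frob_D_lin_upper tensor_frob_D_quad_small tensor_frob_D_cub_small by linarith
  qed
  finally have "tensor_frob n D \<le> (3214915/1000000 * chigh\<^sup>2) * sqrt S"
    by (simp add: algebra_simps)
  hence "(tensor_frob n D)\<^sup>2 \<le> ((3214915/1000000 * chigh\<^sup>2) * sqrt S)\<^sup>2"
    using tensor_frob_nonneg by (intro power_mono) auto
  also have "\<dots> = (3214915/1000000)\<^sup>2 * (chigh^4 * S)"
    unfolding power2_mult_sqrt_S by (simp add: power_mult_distrib power_divide flip: power_mult)
  also have "\<dots> \<le> 10.336 * (chigh^4 * S)"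
    using S_nonneg chigh_pos by (intro mult_right_mono) (auto simp: power2_eq_square)
  finally show ?thesis by (simp add: mult.assoc)
qed

lemma tensor_frob_D_lower: "1.679 * clow^4 * S \<le> (tensor_frob n D)\<^sup>2"
proof -
  have "tensor_frob n D_lin - tensor_frob n D_quad - tensor_frob n D_cub \<le> tensor_frob n D"
    using tensor_frob_add3_le[of n D "\<lambda>i j l. - D_quad i j l" "\<lambda>i j l. - D_cub i j l"]
    unfolding D_split by (simp add: tensor_frob_uminus)
  hence "(13301/10000 * clow\<^sup>2) * sqrt S \<le> tensor_frob n D"
    using tensor_frob_D_lin_lower tensor_frob_D_quad_small tensor_frob_D_cub_small by (simp add: algebra_simps)
  hence "((13301/10000 * clow\<^sup>2) * sqrt S)\<^sup>2 \<le> (tensor_frob n D)\<^sup>2"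
    using S_nonneg clow_pos by (intro power_mono) auto
  moreover have "((13301/10000 * clow\<^sup>2) * sqrt S)\<^sup>2 = (13301/10000)\<^sup>2 * (clow^4 * S)"
    unfolding power2_mult_sqrt_S by (simp add: power_mult_distrib power_divide flip: power_mult)
  moreover have "1.679 * (clow^4 * S) \<le> (13301/10000)\<^sup>2 * (clow^4 * S)"
    using S_nonneg clow_pos by (intro mult_right_mono) (auto simp: power2_eq_square)
  ultimately show ?thesis by (simp add: mult.assoc)
qed

end

lemma ln_power_le_powr:
  fixes x :: real
  assumes "1 \<le> x"
  shows "ln x ^ k \<le> (16 * (real k + 1)) ^ k * x powr (1/16)"
proof -
  define d where "d = 1 / (16 * (real k + 1))"
  have d: "0 < d" unfolding d_def by simp
  have x: "0 < x" using assms by simp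
  have "d * ln x \<le> x powr d - 1"
    using ln_le_minus_one[of "x powr d"] x by simp
  hence "ln x \<le> x powr d / d" using d by (simp add: field_simps)
  hence "ln x ^ k \<le> (x powr d / d) ^ k"
    using assms by (intro power_mono) auto
  also have "\<dots> = (1/d) ^ k * x powr (real k * d)"
    using x by (simp add: power_divide field_simps powr_realpow[symmetric] powr_powr mult.commute)
  also have "x powr (real k * d) \<le> x powr (1/16)"
    using assms by (intro powr_mono) (auto simp: d_def field_simps)
  finally show ?thesis
    using d unfolding d_def by (simp add: mult_left_mono)
qed

lemma eventually_polylog_bounds_small:
  fixes K Cr c1 :: real
  assumes "0 < K" and "0 < Cr" and "0 < c1"
  shows "\<forall>\<^sub>F x in at_top. K * ln x ^ k * sqrt (Cr * x powr 1.25) / x \<le> 1/100000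
           \<and> K * ln x ^ k / sqrt x * (1 + c1 * sqrt (Cr * x powr 1.25 / x))\<^sup>2 \<le> 1/10"
proof -
  define M where "M = (16 * (real k + 1)) ^ k"
  define f1 where "f1 x = x powr (1/16) * sqrt (Cr * x powr 1.25) / x" for x :: real
  define f2 where "f2 x = x powr (1/16) / sqrt x * (1 + c1 * sqrt (Cr * x powr 1.25 / x))\<^sup>2" for x :: real
  have "(f1 \<longlongrightarrow> 0) at_top" "(f2 \<longlongrightarrow> 0) at_top"
    unfolding f1_def f2_def using assms by real_asymp+
  hence "\<forall>\<^sub>F x in at_top. K * M * f1 x < 1/100000" "\<forall>\<^sub>F x in at_top. K * M * f2 x < 1/10"
    by (intro order_tendstoD(2)[OF tendsto_mult_right_zero]; simp)+
  with eventually_ge_at_top[of 1] show ?thesis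
  proof eventually_elim
    case (elim x)
    have polylog: "K * ln x ^ k \<le> K * M * x powr (1/16)"
      using ln_power_le_powr[OF elim(1)] assms(1) unfolding M_def by (simp add: mult.assoc)
    have "K * ln x ^ k * sqrt (Cr * x powr 1.25) / x \<le> K * M * f1 x"
      using mult_right_mono[OF polylog, of "sqrt (Cr * x powr 1.25) / x"] elim(1) assms(2)
      unfolding f1_def by (simp add: mult.assoc)
    moreover have "K * ln x ^ k / sqrt x * (1 + c1 * sqrt (Cr * x powr 1.25 / x))\<^sup>2 \<le> K * M * f2 x"
      using mult_right_mono[OF polylog, of "(1 + c1 * sqrt (Cr * x powr 1.25 / x))\<^sup>2 / sqrt x"] elim(1)
      unfolding f2_def by (simp add: mult.assoc)
    ultimately show ?case using elim(2,3) by linarith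
  qed
qed

lemma eventually_incoherence_parameters_small:
  fixes K Cr c1 :: real
  assumes "0 < K" and "0 < Cr" and "0 < c1"
  shows "\<exists>n0::nat. \<forall>n\<ge>n0. \<forall>r::nat. real r \<le> Cr * real n powr 1.25 \<longrightarrow>
           K * ln (real n) ^ k * sqrt (real r) / real n \<le> 1/100000
         \<and> K * ln (real n) ^ k / sqrt (real n) * (1 + c1 * sqrt (real r / real n))\<^sup>2 \<le> 1/10"
proof -
  have "\<forall>\<^sub>F n in sequentially. K * ln (real n) ^ k * sqrt (Cr * real n powr 1.25) / real n \<le> 1/100000
      \<and> K * ln (real n) ^ k / sqrt (real n) * (1 + c1 * sqrt (Cr * real n powr 1.25 / real n))\<^sup>2 \<le> 1/10"
    by (rule eventually_compose_filterlim[OF eventually_polylog_bounds_small[OF assms] filterlim_real_sequentially])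
  then obtain n0 where n0: "\<And>n. n \<ge> n0 \<Longrightarrow>
        K * ln (real n) ^ k * sqrt (Cr * real n powr 1.25) / real n \<le> 1/100000
      \<and> K * ln (real n) ^ k / sqrt (real n) * (1 + c1 * sqrt (Cr * real n powr 1.25 / real n))\<^sup>2 \<le> 1/10"
    unfolding eventually_sequentially by blast
  have "K * ln (real n) ^ k * sqrt (real r) / real n \<le> 1/100000
      \<and> K * ln (real n) ^ k / sqrt (real n) * (1 + c1 * sqrt (real r / real n))\<^sup>2 \<le> 1/10"
    if "n \<ge> n0" and r: "real r \<le> Cr * real n powr 1.25" for n r :: nat
  proof -
    have polylog: "0 \<le> K * ln (real n) ^ k"
      using assms(1) by (cases "n = 0") auto
    have "K * ln (real n) ^ k * sqrt (real r) / real n \<le> K * ln (real n) ^ k * sqrt (Cr * real n powr 1.25) / real n"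
      using r polylog by (intro divide_right_mono mult_left_mono) auto
    moreover have "(1 + c1 * sqrt (real r / real n))\<^sup>2 \<le> (1 + c1 * sqrt (Cr * real n powr 1.25 / real n))\<^sup>2"
      using r assms(3) by (intro power_mono add_left_mono mult_left_mono real_sqrt_le_mono divide_right_mono) auto
    hence "K * ln (real n) ^ k / sqrt (real n) * (1 + c1 * sqrt (real r / real n))\<^sup>2
        \<le> K * ln (real n) ^ k / sqrt (real n) * (1 + c1 * sqrt (Cr * real n powr 1.25 / real n))\<^sup>2"
      using polylog by (intro mult_left_mono) auto
    ultimately show ?thesis using n0[OF that(1)] by linarith
  qed
  thus ?thesis by blast
qed

lemma mat_frob_permute_cols:
  assumes "bij_betw \<tau> {..<r} {..<r}"
  shows "mat_frob n r (\<lambda>i p. A i (\<tau> p)) = mat_frob n r A"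
  unfolding mat_frob_def using sum.reindex_bij_betw[OF assms, of "\<lambda>j. (A _ j)\<^sup>2"] by simp

lemma sym_cp3_permute_cols:
  assumes "bij_betw \<tau> {..<r} {..<r}"
  shows "sym_cp3 r (\<lambda>i p. U i (\<tau> p)) = sym_cp3 r U"
  unfolding sym_cp3_def using sum.reindex_bij_betw[OF assms, of "\<lambda>p. U _ p * U _ p * U _ p"] by simp

lemma sym_cp3_error_bounds:
  fixes n r :: nat and uh U :: "nat \<Rightarrow> nat \<Rightarrow> real" and cs :: "nat \<Rightarrow> real" and \<sigma> :: "nat \<Rightarrow> nat"
  defines "clow \<equiv> Min ((\<lambda>p. cs p powr (1/3)) ` {..<r})"
    and "chigh \<equiv> Max ((\<lambda>p. cs p powr (1/3)) ` {..<r})"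
    and "H \<equiv> \<lambda>i j. U i j - cs (\<sigma> j) powr (1/3) * uh i (\<sigma> j)"
    and "T_err \<equiv> \<lambda>i j l. sym_cp3 r U i j l - (\<Sum>p<r. cs p * uh i p * uh j p * uh l p)"
  assumes r: "1 \<le> r" and cs: "\<forall>p<r. 0 < cs p" and unit: "\<forall>p<r. vec_norm n (col uh p) = 1"
    and incoherent: "\<forall>p<r. \<forall>q<r. p \<noteq> q \<longrightarrow> \<bar>inner_n n (col uh p) (col uh q)\<bar> \<le> g"
    and "0 \<le> g" and "spec_norm n r uh \<le> \<beta>"
    and "spec_norm r r (\<lambda>p q. inner_n n (col uh p) (col uh q) * inner_n n (col uh p) (col uh q)
           - (if p = q then 1 else 0)) \<le> \<epsilon>"
    and "0 \<le> \<epsilon>" and "\<epsilon> \<le> 1/100000" and "g * \<beta>\<^sup>2 \<le> 1/10"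
    and \<sigma>: "bij_betw \<sigma> {..<r} {..<r}"
    and H_small: "mat_frob n r H \<le> 0.07 * clow / (chigh / clow) ^ 3"
  shows "1.679 * clow ^ 4 * (mat_frob n r H)\<^sup>2 \<le> (tensor_frob n T_err)\<^sup>2
       \<and> (tensor_frob n T_err)\<^sup>2 \<le> 10.336 * (chigh / clow) ^ 4 * clow ^ 4 * (mat_frob n r H)\<^sup>2"
proof -
  define c where "c = (\<lambda>p. cs p powr (1/3))"
  define \<tau> where "\<tau> = inv_into {..<r} \<sigma>"
  define h where "h p i = H i (\<tau> p)" for p i
  have \<tau>: "bij_betw \<tau> {..<r} {..<r}"
    unfolding \<tau>_def by (rule bij_betw_inv_into[OF \<sigma>])
  have c_range: "finite (c ` {..<r})" "c ` {..<r} \<noteq> {}"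
    using r by (auto simp: lessThan_empty_iff)
  have c_lower: "p < r \<Longrightarrow> clow \<le> c p" and c_upper: "p < r \<Longrightarrow> c p \<le> chigh" for p
    using c_range unfolding clow_def chigh_def c_def[symmetric] by auto
  have clow_pos: "0 < clow"
    using Min_in[OF c_range] cs unfolding clow_def c_def by auto
  have "clow \<le> chigh"
    using c_lower[of 0] c_upper[of 0] r by simp
  interpret cp3_perturbation n r "col uh" h c clow chigh g \<beta> \<epsilon>
    using c_lower c_upper clow_pos \<open>clow \<le> chigh\<close> assms(7-11)
    by unfold_locales (auto simp: col_def)
  have S_eq: "S = (mat_frob n r H)\<^sup>2"
    unfolding S_eq_mat_frob h_def mat_frob_permute_cols[OF \<tau>] ..
  interpret small_cp3_perturbation n r "col uh" h c clow chigh g \<beta> \<epsilon>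
  proof unfold_locales
    have "0.07 * clow / (chigh / clow) ^ 3 = 7/100 * clow^4 / chigh^3"
      using clow_pos by (simp add: power_divide field_simps power4_eq_xxxx power3_eq_cube)
    thus "sqrt S \<le> 7/100 * clow^4 / chigh^3"
      using H_small S_eq by (simp add: mat_frob_def sum_nonneg)
  qed (use assms(12-14) in auto)
  have "T_err = D"
  proof -
    have "U i (\<tau> p) = h p i + v p i" if "p < r" for i p
      using bij_betw_inv_into_right[OF \<sigma>] that unfolding v_def unfolding h_def H_def col_def c_def \<tau>_def by simp
    hence "sym_cp3 r (\<lambda>i p. U i (\<tau> p)) = sym_cp3 r (\<lambda>i p. h p i + v p i)"
      unfolding sym_cp3_def by (intro ext sum.cong) auto
    hence "sym_cp3 r U = sym_cp3 r (\<lambda>i p. h p i + v p i)"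
      unfolding sym_cp3_permute_cols[OF \<tau>] .
    moreover have "cs p = c p ^ 3" if "p < r" for p
    proof -
      have "0 < cs p" using cs that by simp
      thus ?thesis unfolding c_def by (simp add: powr_realpow[symmetric] powr_powr)
    qed
    ultimately show ?thesis
      unfolding T_err_def D_eq_sym_cp3_diff by (intro ext arg_cong2[where f = minus] sum.cong) (auto simp: col_def)
  qed
  moreover have "(chigh / clow) ^ 4 * clow ^ 4 = chigh ^ 4"
    using clow_pos by (simp add: power_divide)
  ultimately show ?thesis
    using tensor_frob_D_lower tensor_frob_D_upper unfolding S_eq by (simp add: mult.assoc)
qed

theorem lemma2:
  fixes K Cr c1 :: real and k :: nat
  assumes "K > 0" and "Cr > 0" and "c1 > 0"
  shows "\<exists>n0::nat. \<forall>n\<ge>n0. \<forall>(r::nat) (uh::nat \<Rightarrow> nat \<Rightarrow> real) (cs::nat \<Rightarrow> real)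
           (U::nat \<Rightarrow> nat \<Rightarrow> real) (\<sigma>::nat \<Rightarrow> nat).
    let \<gamma> = K * (ln (real n)) ^ k;
        Ustar = (\<lambda>i p. cs p powr (1/3) * uh i p);
        clow = Min ((\<lambda>p. cs p powr (1/3)) ` {..<r});
        chigh = Max ((\<lambda>p. cs p powr (1/3)) ` {..<r});
        \<omega> = chigh / clow;
        H = (\<lambda>i j. U i j - Ustar i (\<sigma> j));
        Tstar = (\<lambda>i j l. \<Sum>p<r. cs p * uh i p * uh j p * uh l p);
        T = sym_cp3 r U;
        G = (\<lambda>p q. inner_n n (col uh p) (col uh q))
    in (r \<ge> 1 \<and> real r \<le> Cr * real n powr 1.25
        \<and> (\<forall>p<r. cs p > 0) \<and> (\<forall>p<r. vec_norm n (col uh p) = 1)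
        \<and> (\<forall>p<r. \<forall>q<r. p \<noteq> q \<longrightarrow> \<bar>G p q\<bar> \<le> \<gamma> / sqrt (real n))
        \<and> spec_norm n r uh \<le> 1 + c1 * sqrt (real r / real n)
        \<and> spec_norm r r (\<lambda>p q. G p q * G p q - (if p = q then 1 else 0)) \<le> \<gamma> * sqrt (real r) / real n
        \<and> bij_betw \<sigma> {..<r} {..<r}
        \<and> (\<forall>\<tau>. bij_betw \<tau> {..<r} {..<r} \<longrightarrow>
             mat_frob n r H \<le> mat_frob n r (\<lambda>i j. U i j - Ustar i (\<tau> j)))
        \<and> mat_frob n r H \<le> 0.07 * clow / \<omega> ^ 3)
      \<longrightarrow> 1.679 * clow ^ 4 * (mat_frob n r H)\<^sup>2 \<le> (tensor_frob n (\<lambda>i j l. T i j l - Tstar i j l))\<^sup>2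
        \<and> (tensor_frob n (\<lambda>i j l. T i j l - Tstar i j l))\<^sup>2 \<le> 10.336 * \<omega> ^ 4 * clow ^ 4 * (mat_frob n r H)\<^sup>2"
proof -
  obtain n0 where n0: "\<forall>n\<ge>n0. \<forall>r::nat. real r \<le> Cr * real n powr 1.25 \<longrightarrow>
      K * ln (real n) ^ k * sqrt (real r) / real n \<le> 1/100000
    \<and> K * ln (real n) ^ k / sqrt (real n) * (1 + c1 * sqrt (real r / real n))\<^sup>2 \<le> 1/10"
    using eventually_incoherence_parameters_small[OF assms] by blast
  have polylog_nonneg: "0 \<le> K * ln (real n) ^ k" for n :: nat
    using assms(1) by (cases "n = 0") auto
  show ?thesis
    unfolding Let_def
    apply (intro exI[of _ n0] allI impI)
    apply (elim conjE)
    subgoal for n r uh cs U \<sigma>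
      by (rule sym_cp3_error_bounds[where g = "K * ln (real n) ^ k / sqrt (real n)"
            and \<beta> = "1 + c1 * sqrt (real r / real n)" and \<epsilon> = "K * ln (real n) ^ k * sqrt (real r) / real n"])
         (use n0 polylog_nonneg[of n] in auto)
    done
qed

end
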